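(* Let $r$ and $k$ be positive integers with $k>r$, let $H$ be the complete graph of order $r+k$, and let $\mathbf{E}=(E_0,E_1,E_2)$ be an ordered partition of $E(H)$. Then (1) if $r<k\le\frac{3r-7}{2}$ and $|E_1|+2|E_2|<\min\left\{\frac12(k+3r-4)(k-r+3),\ (k-r+2)(k+r-1)\right\}$, then $H$ has a good matching for $\mathbf{E}$ of order $r$; and (2) if $k>\frac{3r-7}{2}$ and $|E_1|+2|E_2|<\min\left\{\frac12(k+1)(k+2),\ (k-r+2)(k+r-1)\right\}$, then $H$ has a good matching for $\mathbf{E}$ of order $r$.
   Context: An ordered partition $(E_0,E_1,E_2)$ of a set is a triple of pairwise disjoint (possibly empty) sets with that union. A matching $M$ is a good matching for $\mathbf{E}$ if $M\cap E_2=\emptyset$ and $|M\cap E_1|\le1$; the order of a matching is its number of edges. *)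

theory Defs
  imports Complex_Main
begin

definition complete_edges :: "'a set \<Rightarrow> 'a set set" where
  "complete_edges V = {e. e \<subseteq> V \<and> card e = 2}"

definition matching :: "'a set set \<Rightarrow> bool" where
  "matching M \<longleftrightarrow> (\<forall>e\<in>M. \<forall>f\<in>M. e \<noteq> f \<longrightarrow> e \<inter> f = {})"

definition ordered_partition3 :: "'b set \<Rightarrow> 'b set \<Rightarrow> 'b set \<Rightarrow> 'b set \<Rightarrow> bool" where
  "ordered_partition3 S E0 E1 E2 \<longleftrightarrow>
     E0 \<inter> E1 = {} \<and> E0 \<inter> E2 = {} \<and> E1 \<inter> E2 = {} \<and> E0 \<union> E1 \<union> E2 = S"

definition good_matching :: "'a set set \<Rightarrow> 'a set set \<Rightarrow> 'a set set \<Rightarrow> 'a set set \<Rightarrow> bool" where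
  "good_matching EH E1 E2 M \<longleftrightarrow>
     M \<subseteq> EH \<and> matching M \<and> M \<inter> E2 = {} \<and> card (M \<inter> E1) \<le> 1"

end

theory Submission
  imports Defs "HOL-Combinatorics.Transposition"
begin

text \<open>
  Number the vertices \<open>0, \<dots>, n - 1\<close> with \<open>n = r + k\<close> and weight the edges of \<open>E\<^sub>i\<close> by \<open>i\<close>:
  a good matching of order \<open>r\<close> is an \<open>r\<close>-matching of weight at most 1, and the total weight
  is \<open>|E\<^sub>1| + 2|E\<^sub>2|\<close>. Suppose every \<open>r\<close>-matching weighs at least 2. Compressing from \<open>i\<close>
  to \<open>j > i\<close> (the edges \<open>{x,i}\<close>, \<open>{x,j}\<close> receive the smaller and the larger of their two
  weights) keeps this property and the total weight and increases the moment
  \<open>\<Sum> c(e) \<cdot> \<Sum>e\<close>, so we may assume the weighting is shifted: \<open>c{x,i} \<le> c{x,j}\<close> for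
  \<open>i < j\<close>. Then induct on \<open>r\<close>, looking at the matching \<open>{i, 2r-3-i}\<close> (\<open>i < r - 1\<close>) and the
  edge \<open>{0, 2r-1}\<close>. If that edge weighs 0, vertex 0 can be deleted and \<open>r\<close> lowered. If an
  edge of the nested matching has positive weight, shiftedness gives positive weight to a whole
  triangle of edges.
  Otherwise the nested matching weighs 0, and completing it in two ways forces
  \<open>c{2r-2, 2r-1} \<ge> 2\<close> and \<open>c{p, 2r-2} + c{2r-3-p, 2r-1} \<ge> 2\<close>, which bounds every lower degree.
\<close>

section \<open>Edges of complete graphs\<close>

lemma doubleton_in_complete_edges [simp]:
  "{a, b} \<in> complete_edges V \<longleftrightarrow> a \<in> V \<and> b \<in> V \<and> a \<noteq> b"
  unfolding complete_edges_def by (auto simp: card_insert_if)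

lemma complete_edgesE:
  assumes "e \<in> complete_edges V"
  obtains a b where "e = {a, b}" "a \<in> V" "b \<in> V" "a \<noteq> b"
proof -
  from assms have "e \<subseteq> V" "card e = 2"
    unfolding complete_edges_def by auto
  then show thesis
    using that by (auto simp: card_2_iff)
qed

lemma complete_edges_subset_Pow: "complete_edges V \<subseteq> Pow V"
  unfolding complete_edges_def by auto

lemma finite_complete_edges: "finite V \<Longrightarrow> finite (complete_edges V)"
  using complete_edges_subset_Pow by (rule finite_subset) simp

lemma complete_edges_empty [simp]: "complete_edges {} = {}"
  unfolding complete_edges_def by auto

lemma complete_edges_mono: "V \<subseteq> W \<Longrightarrow> complete_edges V \<subseteq> complete_edges W"
  unfolding complete_edges_def by auto

lemma card_complete_edges: "finite V \<Longrightarrow> card (complete_edges V) = card V choose 2"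
  unfolding complete_edges_def by (simp add: n_subsets)

lemma complete_edges_insert:
  "complete_edges (insert v V) = complete_edges V \<union> (\<lambda>a. {a, v}) ` (V - {v})"
proof (intro equalityI subsetI)
  fix e assume "e \<in> complete_edges (insert v V)"
  then obtain a b where "e = {a, b}" "a \<in> insert v V" "b \<in> insert v V" "a \<noteq> b"
    by (rule complete_edgesE)
  then show "e \<in> complete_edges V \<union> (\<lambda>a. {a, v}) ` (V - {v})"
    by (auto simp: image_iff insert_commute)
next
  fix e assume "e \<in> complete_edges V \<union> (\<lambda>a. {a, v}) ` (V - {v})"
  then show "e \<in> complete_edges (insert v V)"
    using complete_edges_mono[of V "insert v V"] by auto
qed

lemma complete_edges_through:
  assumes "i \<in> V" "i \<noteq> j"
  shows "{e \<in> complete_edges V. i \<in> e \<and> j \<notin> e} = (\<lambda>x. {x, i}) ` (V - {i, j})"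
proof (intro equalityI subsetI)
  fix e assume "e \<in> {e \<in> complete_edges V. i \<in> e \<and> j \<notin> e}"
  then have "e \<in> complete_edges V" "i \<in> e" "j \<notin> e" by auto
  then obtain x where "x \<in> V - {i, j}" "e = {x, i}"
    by (elim complete_edgesE) (auto simp: insert_commute)
  then show "e \<in> (\<lambda>x. {x, i}) ` (V - {i, j})"
    by (rule rev_image_eqI)
qed (use assms in auto)

lemma sum_complete_edges_split:
  assumes "finite V" "i \<in> V" "j \<in> V" "i \<noteq> j"
  shows "sum g (complete_edges V) =
           (\<Sum>x\<in>V - {i, j}. g {x, i} + g {x, j}) + sum g {e \<in> complete_edges V. i \<in> e \<longleftrightarrow> j \<in> e}"
proof -
  let ?E = "complete_edges V"
  let ?A = "{e \<in> ?E. i \<in> e \<and> j \<notin> e}" and ?B = "{e \<in> ?E. j \<in> e \<and> i \<notin> e}"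
  have E: "?E = (?A \<union> ?B) \<union> {e \<in> ?E. i \<in> e \<longleftrightarrow> j \<in> e}"
    by blast
  have fin: "finite {e \<in> ?E. P e}" for P
    by (rule finite_subset[OF _ finite_complete_edges[OF assms(1)]]) blast
  have inj: "inj_on (\<lambda>x. {x, v}) (V - {i, j})" for v
    by (auto intro!: inj_onI simp: doubleton_eq_iff)
  have "sum g ?A = (\<Sum>x\<in>V - {i, j}. g {x, i})"
    unfolding complete_edges_through[OF assms(2,4)] sum.reindex[OF inj] by simp
  moreover have "?B = (\<lambda>x. {x, j}) ` (V - {i, j})"
    using complete_edges_through[OF assms(3) assms(4)[symmetric]] by (metis insert_commute)
  then have "sum g ?B = (\<Sum>x\<in>V - {i, j}. g {x, j})"
    by (simp only: sum.reindex[OF inj] o_def)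
  moreover have "sum g (?A \<union> ?B) = sum g ?A + sum g ?B"
    by (rule sum.union_disjoint[OF fin fin]) blast
  moreover have "sum g ?E = sum g (?A \<union> ?B) + sum g {e \<in> ?E. i \<in> e \<longleftrightarrow> j \<in> e}"
    by (subst E, rule sum.union_disjoint[OF finite_UnI[OF fin fin] fin]) blast
  ultimately show ?thesis
    by (simp add: sum.distrib)
qed

lemma image_complete_edges:
  assumes "inj_on f V"
  shows "image f ` complete_edges V = complete_edges (f ` V)"
proof (intro equalityI subsetI)
  fix e' assume "e' \<in> image f ` complete_edges V"
  then obtain a b where "e' = {f a, f b}" "a \<in> V" "b \<in> V" "a \<noteq> b"
    by (auto elim: complete_edgesE)
  then show "e' \<in> complete_edges (f ` V)"
    using assms by (simp add: inj_on_eq_iff)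
next
  fix e' assume "e' \<in> complete_edges (f ` V)"
  then obtain x y where e': "e' = {x, y}" "x \<in> f ` V" "y \<in> f ` V" "x \<noteq> y"
    by (rule complete_edgesE)
  then obtain a b where "x = f a" "y = f b" "a \<in> V" "b \<in> V"
    by blast
  with e' have "e' = f ` {a, b}" "{a, b} \<in> complete_edges V"
    by auto
  then show "e' \<in> image f ` complete_edges V"
    by blast
qed

lemma inj_on_image_complete_edges: "inj_on f V \<Longrightarrow> inj_on (image f) (complete_edges V)"
  using inj_on_image_Pow complete_edges_subset_Pow by (rule inj_on_subset)

lemma sum_complete_edges_image:
  "inj_on f V \<Longrightarrow> (\<Sum>e\<in>complete_edges V. g (f ` e)) = sum g (complete_edges (f ` V))"
  by (simp add: image_complete_edges[symmetric] sum.reindex inj_on_image_complete_edges)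

lemma card_Union_complete_edges:
  assumes "M \<subseteq> complete_edges V"
  shows "card (\<Union>M) \<le> 2 * card M"
proof -
  have "card (\<Union>M) \<le> sum card M" by (rule card_Union_le_sum_card)
  also have "\<dots> = 2 * card M"
    using assms unfolding complete_edges_def by (simp add: subset_iff)
  finally show ?thesis .
qed

section \<open>Matchings and weightings\<close>

definition matchings :: "'a set \<Rightarrow> nat \<Rightarrow> 'a set set set" where
  "matchings V r = {M. M \<subseteq> complete_edges V \<and> matching M \<and> card M = r}"

lemma matchings_mono: "V \<subseteq> W \<Longrightarrow> matchings V r \<subseteq> matchings W r"
  unfolding matchings_def using complete_edges_mono by blast

lemma finite_matchings: "finite V \<Longrightarrow> M \<in> matchings V r \<Longrightarrow> finite M"
  unfolding matchings_def using finite_complete_edges finite_subset by blast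

lemma matching_edges_eq:
  "M \<in> matchings V r \<Longrightarrow> e \<in> M \<Longrightarrow> f \<in> M \<Longrightarrow> x \<in> e \<Longrightarrow> x \<in> f \<Longrightarrow> e = f"
  unfolding matchings_def matching_def by blast

lemma matchings_insert:
  assumes "M \<in> matchings V r" "finite V" "e \<in> complete_edges V" "e \<inter> \<Union>M = {}"
  shows "insert e M \<in> matchings V (Suc r)" and "e \<notin> M"
proof -
  have "e \<noteq> {}"
    using assms(3) unfolding complete_edges_def by auto
  then show "e \<notin> M"
    using assms(4) by blast
  moreover have "finite M"
    using finite_matchings[OF assms(2,1)] .
  moreover have "matching (insert e M)"
    using assms(1,4) unfolding matchings_def matching_def by blast
  ultimately show "insert e M \<in> matchings V (Suc r)"
    using assms(1,3) unfolding matchings_def by simp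
qed

lemma matchings_remove:
  assumes "M \<in> matchings V r" "e \<in> M" "finite V"
  shows "M - {e} \<in> matchings V (r - 1)" and "e \<inter> \<Union>(M - {e}) = {}"
  using assms finite_matchings[OF assms(3,1)]
  unfolding matchings_def matching_def by auto

lemma matchings_image:
  assumes "M \<in> matchings V r" "inj_on f V"
  shows "image f ` M \<in> matchings (f ` V) r"
proof -
  have sub: "M \<subseteq> complete_edges V" and card: "card M = r" and mat: "matching M"
    using assms(1) unfolding matchings_def by auto
  have "inj_on f (\<Union>M)"
    using assms(2) sub complete_edges_subset_Pow by (blast intro: inj_on_subset)
  then have "matching (image f ` M)"
    unfolding matching_def
  proof (intro ballI impI)
    fix e' g' assume "e' \<in> image f ` M" "g' \<in> image f ` M" "e' \<noteq> g'"
    then obtain e g where "e \<in> M" "g \<in> M" "e' = f ` e" "g' = f ` g" "e \<noteq> g"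
      by blast
    then show "e' \<inter> g' = {}"
      using mat \<open>inj_on f (\<Union>M)\<close> unfolding matching_def
      by (metis Sup_upper image_empty inj_on_image_Int)
  qed
  moreover have "card (image f ` M) = r"
    using card inj_on_subset[OF inj_on_image_complete_edges[OF assms(2)] sub]
    by (simp add: card_image)
  moreover have "image f ` M \<subseteq> complete_edges (f ` V)"
    using sub image_complete_edges[OF assms(2)] by blast
  ultimately show ?thesis
    unfolding matchings_def by blast
qed

definition no_light_matching :: "'a set \<Rightarrow> nat \<Rightarrow> ('a set \<Rightarrow> nat) \<Rightarrow> bool" where
  "no_light_matching V r c \<longleftrightarrow> (\<forall>M\<in>matchings V r. 2 \<le> sum c M)"

lemma no_light_matching_insert:
  assumes "no_light_matching V (Suc m) c" "finite V" "M \<in> matchings V m"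
    and "e \<in> complete_edges V" "e \<inter> \<Union>M = {}"
  shows "2 \<le> c e + sum c M"
proof -
  have "2 \<le> sum c (insert e M)"
    using assms matchings_insert(1) unfolding no_light_matching_def by blast
  then show ?thesis
    using matchings_insert(2)[OF assms(3,2,4,5)] finite_matchings[OF assms(2,3)] by simp
qed

lemma no_light_matching_image:
  assumes "no_light_matching (f ` W) r c" "inj_on f W"
  shows "no_light_matching W r (\<lambda>e. c (f ` e))"
  unfolding no_light_matching_def
proof
  fix M assume M: "M \<in> matchings W r"
  have "inj_on (image f) M"
    using M inj_on_image_complete_edges[OF assms(2)] unfolding matchings_def by (blast intro: inj_on_subset)
  then have "(\<Sum>e\<in>M. c (f ` e)) = sum c (image f ` M)"
    by (simp add: sum.reindex)
  also have "2 \<le> \<dots>"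
    using assms matchings_image[OF M assms(2)] unfolding no_light_matching_def by blast
  finally show "2 \<le> (\<Sum>e\<in>M. c (f ` e))" .
qed

section \<open>Compression\<close>

lemma rearrangement_min_max:
  fixes p q a b :: nat
  assumes "p \<le> q"
  shows "p * a + q * b \<le> p * min a b + q * max a b"
    and "p < q \<Longrightarrow> b < a \<Longrightarrow> p * a + q * b < p * min a b + q * max a b"
proof -
  obtain d where q: "q = p + d" using assms le_Suc_ex by blast
  show "p * a + q * b \<le> p * min a b + q * max a b"
  proof (cases "a \<le> b")
    case False
    then obtain t where "a = b + t" by (metis le_add_diff_inverse nat_le_linear)
    then show ?thesis using q by (simp add: algebra_simps)
  qed simp
  show "p * a + q * b < p * min a b + q * max a b" if "p < q" "b < a"
  proof -
    obtain t where "a = b + t" "0 < t"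
      using \<open>b < a\<close> by (metis add_diff_inverse_nat less_imp_not_less zero_less_diff)
    moreover have "0 < d" using q that by simp
    ultimately show ?thesis using q by (simp add: algebra_simps)
  qed
qed

definition compress :: "nat \<Rightarrow> nat \<Rightarrow> (nat set \<Rightarrow> nat) \<Rightarrow> nat set \<Rightarrow> nat" where
  "compress i j c e =
     (if i \<in> e \<and> j \<notin> e then min (c e) (c (transpose i j ` e))
      else if j \<in> e \<and> i \<notin> e then max (c e) (c (transpose i j ` e))
      else c e)"

lemma compress_fixed: "(i \<in> e \<longleftrightarrow> j \<in> e) \<Longrightarrow> compress i j c e = c e"
  unfolding compress_def by auto

lemma compress_doubleton:
  assumes "x \<noteq> i" "x \<noteq> j" "i \<noteq> j"
  shows "compress i j c {x, i} = min (c {x, i}) (c {x, j})"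
    and "compress i j c {x, j} = max (c {x, i}) (c {x, j})"
  using assms unfolding compress_def by auto

lemma compress_ge:
  "(i \<in> e \<and> j \<notin> e \<Longrightarrow> c e \<le> c (transpose i j ` e)) \<Longrightarrow> c e \<le> compress i j c e"
  unfolding compress_def by auto

lemma compress_ge_transpose:
  "(i \<in> e \<and> j \<notin> e \<Longrightarrow> c (transpose i j ` e) \<le> c e) \<Longrightarrow> c (transpose i j ` e) \<le> compress i j c e"
  unfolding compress_def by auto

lemma sum_compress:
  assumes "finite V" "i \<in> V" "j \<in> V" "i \<noteq> j"
  shows "sum (compress i j c) (complete_edges V) = sum c (complete_edges V)"
proof -
  have "compress i j c {x, i} + compress i j c {x, j} = c {x, i} + c {x, j}" if "x \<in> V - {i, j}" for x
    using that assms(4) by (auto simp: compress_doubleton)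
  then show ?thesis
    unfolding sum_complete_edges_split[OF assms] by (simp add: compress_fixed)
qed

lemma no_light_matching_compress:
  assumes "no_light_matching V r c" "finite V" "i \<in> V" "j \<in> V"
  shows "no_light_matching V r (compress i j c)"
  unfolding no_light_matching_def
proof
  fix M assume M: "M \<in> matchings V r"
  let ?\<tau> = "transpose i j"
  show "2 \<le> sum (compress i j c) M"
  proof (cases "\<exists>e0\<in>M. i \<in> e0 \<and> j \<notin> e0 \<and> c (?\<tau> ` e0) < c e0")
    case True
    then obtain e0 where e0: "e0 \<in> M" "i \<in> e0" "c (?\<tau> ` e0) < c e0"
      by blast
    \<comment> \<open>\<open>e0\<close> is the only edge of \<open>M\<close> through \<open>i\<close>, so on \<open>M\<close> the compression
      dominates \<open>c\<close> composed with the transposition\<close>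
    have "c (?\<tau> ` e) \<le> compress i j c e" if "e \<in> M" for e
      using matching_edges_eq[OF M that e0(1) _ e0(2)] e0(3) by (intro compress_ge_transpose) auto
    then have "sum (\<lambda>e. c (?\<tau> ` e)) M \<le> sum (compress i j c) M"
      by (rule sum_mono)
    moreover have "no_light_matching V r (\<lambda>e. c (?\<tau> ` e))"
      using no_light_matching_image[of ?\<tau> V r c] assms by simp
    ultimately show ?thesis
      using M unfolding no_light_matching_def by fastforce
  next
    case False
    then have "sum c M \<le> sum (compress i j c) M"
      by (intro sum_mono compress_ge) (auto simp: not_less)
    then show ?thesis
      using assms(1) M unfolding no_light_matching_def by fastforce
  qed
qed

definition moment :: "nat set \<Rightarrow> (nat set \<Rightarrow> nat) \<Rightarrow> nat" where
  "moment V c = (\<Sum>e\<in>complete_edges V. \<Sum>e * c e)"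

lemma moment_compress_less:
  assumes "finite V" "i \<in> V" "j \<in> V" "i < j"
    and "x \<in> V" "x \<noteq> i" "x \<noteq> j" "c {x, j} < c {x, i}"
  shows "moment V c < moment V (compress i j c)"
proof -
  have ij: "i \<noteq> j" using assms(4) by simp
  let ?gain = "\<lambda>d x. (x + i) * d {x, i} + (x + j) * d {x, j}"
  have "(\<Sum>y\<in>V - {i, j}. ?gain c y) < (\<Sum>y\<in>V - {i, j}. ?gain (compress i j c) y)"
  proof (rule sum_strict_mono_ex1)
    show "finite (V - {i, j})" using assms(1) by simp
    show "\<forall>y\<in>V - {i, j}. ?gain c y \<le> ?gain (compress i j c) y"
      using assms(4) by (auto simp: compress_doubleton rearrangement_min_max(1))
    show "\<exists>y\<in>V - {i, j}. ?gain c y < ?gain (compress i j c) y"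
      using assms(4-8) by (auto simp: compress_doubleton intro!: rearrangement_min_max(2))
  qed
  moreover have "\<Sum>{x, v} = x + v" if "x \<noteq> v" for x v :: nat
    using that by simp
  ultimately show ?thesis
    unfolding moment_def sum_complete_edges_split[OF assms(1-3) ij] using assms(6,7) ij
    by (simp add: compress_fixed)
qed

lemma moment_le: "moment {..<n} c \<le> 2 * n * sum c (complete_edges {..<n})"
proof -
  have "\<Sum>e \<le> 2 * n" if "e \<in> complete_edges {..<n}" for e
  proof -
    have "\<Sum>e \<le> of_nat (card e) * n"
      by (rule sum_bounded_above) (use that in \<open>auto simp: complete_edges_def\<close>)
    then show ?thesis
      using that unfolding complete_edges_def by simp
  qed
  then show ?thesis
    unfolding moment_def sum_distrib_left by (intro sum_mono) simp
qed

definition shifted :: "nat \<Rightarrow> (nat set \<Rightarrow> nat) \<Rightarrow> bool" where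
  "shifted n c \<longleftrightarrow>
     (\<forall>x i j. x < n \<longrightarrow> j < n \<longrightarrow> i < j \<longrightarrow> x \<noteq> i \<longrightarrow> x \<noteq> j \<longrightarrow> c {x, i} \<le> c {x, j})"

lemma obtain_shifted:
  assumes "no_light_matching {..<n} r c0"
  obtains c where "shifted n c" "no_light_matching {..<n} r c"
    "sum c (complete_edges {..<n}) = sum c0 (complete_edges {..<n})"
proof -
  define P where
    "P c \<longleftrightarrow> no_light_matching {..<n} r c \<and> sum c (complete_edges {..<n}) = sum c0 (complete_edges {..<n})"
    for c
  have "\<forall>c. P c \<longrightarrow> moment {..<n} c < 2 * n * sum c0 (complete_edges {..<n}) + 1"
    using moment_le unfolding P_def by (metis less_Suc_eq_le Suc_eq_plus1)
  moreover have "P c0"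
    using assms unfolding P_def by simp
  ultimately obtain c where c: "P c" and max: "\<And>d. P d \<Longrightarrow> moment {..<n} d \<le> moment {..<n} c"
    using Lattices_Big.ex_has_greatest_nat[of P c0 "moment {..<n}"] by blast
  have "shifted n c"
    unfolding shifted_def
  proof (intro allI impI leI notI)
    fix x i j assume "x < n" "j < n" "i < j" "x \<noteq> i" "x \<noteq> j" "c {x, j} < c {x, i}"
    moreover from this have "P (compress i j c)"
      using c no_light_matching_compress sum_compress unfolding P_def by auto
    ultimately show False
      using max[of "compress i j c"] moment_compress_less[of "{..<n}" i j x c] by simp
  qed
  then show ?thesis
    using that c unfolding P_def by blast
qed

section \<open>Shifted weightings without light matchings\<close>

lemma shifted_mono:
  assumes "shifted n c" "a < b" "b < n" "a0 \<le> a" "b0 \<le> b" "a0 < b0"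
  shows "c {a0, b0} \<le> c {a, b}"
proof -
  have "c {a0, b0} \<le> c {a0, b}"
    using assms unfolding shifted_def by (cases "b0 < b") auto
  also have "c {a0, b} \<le> c {a, b}"
    using assms unfolding shifted_def by (cases "a0 < a") (auto simp: insert_commute)
  finally show ?thesis .
qed

definition lower_degree :: "(nat set \<Rightarrow> nat) \<Rightarrow> nat \<Rightarrow> nat" where
  "lower_degree c b = (\<Sum>a<b. c {a, b})"

lemma sum_complete_edges_lessThan:
  "sum c (complete_edges {..<n}) = (\<Sum>b<n. lower_degree c b)"
proof (induction n)
  case (Suc n)
  have "complete_edges {..<Suc n} = complete_edges {..<n} \<union> (\<lambda>a. {a, n}) ` {..<n}"
    using complete_edges_insert[of n "{..<n}"] by (simp add: lessThan_Suc)
  moreover have "inj_on (\<lambda>a. {a, n}) {..<n}"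
    by (auto intro!: inj_onI simp: doubleton_eq_iff)
  moreover have "complete_edges {..<n} \<inter> (\<lambda>a. {a, n}) ` {..<n} = {}"
    unfolding complete_edges_def by auto
  ultimately show ?case
    using Suc finite_complete_edges[of "{..<n}"]
    by (simp add: sum.union_disjoint sum.reindex lower_degree_def)
qed simp

lemma sum_lower_degree_le_weight:
  "B \<subseteq> {..<n} \<Longrightarrow> (\<Sum>b\<in>B. lower_degree c b) \<le> sum c (complete_edges {..<n})"
  unfolding sum_complete_edges_lessThan by (rule sum_mono2) auto

lemma lower_degree_ge:
  assumes "lo \<le> b" "\<And>a. a < lo \<Longrightarrow> m \<le> c {a, b}"
    and "\<And>a. lo \<le> a \<Longrightarrow> a < b \<Longrightarrow> m' \<le> c {a, b}"
  shows "lo * m + (b - lo) * m' \<le> lower_degree c b"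
proof -
  have "lo * m \<le> (\<Sum>a\<in>{0..<lo}. c {a, b})"
    using sum_bounded_below[of "{0..<lo}" m "\<lambda>a. c {a, b}"] assms(2) by simp
  moreover have "(b - lo) * m' \<le> (\<Sum>a\<in>{lo..<b}. c {a, b})"
    using sum_bounded_below[of "{lo..<b}" m' "\<lambda>a. c {a, b}"] assms(3) by simp
  moreover have "(\<Sum>a\<in>{0..<lo}. c {a, b}) + (\<Sum>a\<in>{lo..<b}. c {a, b}) = lower_degree c b"
    unfolding lower_degree_def atLeast0LessThan[symmetric] using assms(1) by (intro sum.atLeastLessThan_concat) auto
  ultimately show ?thesis
    by linarith
qed

lemma sum_atLeastLessThan_affine:
  assumes "m \<le> n"
  shows "2 * (\<Sum>b\<in>{m..<n}. int b - s) = (int n - int m) * (int n + int m - 1 - 2 * s)"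
  using assms
proof (induction n rule: dec_induct)
  case (step n)
  then show ?case
    by (simp add: atLeastLessThanSuc algebra_simps)
qed simp

lemma weight_ge_of_no_light_matching_one:
  assumes "no_light_matching {..<n} 1 c"
  shows "n * (n - 1) \<le> sum c (complete_edges {..<n})"
proof -
  have "2 \<le> c e" if "e \<in> complete_edges {..<n}" for e
  proof -
    have "{e} \<in> matchings {..<n} 1"
      using that unfolding matchings_def matching_def by simp
    then show ?thesis
      using assms unfolding no_light_matching_def by fastforce
  qed
  then have "2 * card (complete_edges {..<n}) \<le> sum c (complete_edges {..<n})"
    using sum_mono[of "complete_edges {..<n}" "\<lambda>_. 2" c] by simp
  moreover have "even (n * (n - 1))"
    by (cases n) auto
  then have "2 * (n * (n - 1) div 2) = n * (n - 1)"
    by simp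
  ultimately show ?thesis
    by (simp add: card_complete_edges choose_two)
qed

lemma shifted_delete_zero: "shifted (Suc m) c \<Longrightarrow> shifted m (\<lambda>e. c (Suc ` e))"
  unfolding shifted_def by simp

lemma weight_image_Suc_le:
  fixes c :: "nat set \<Rightarrow> nat"
  shows "sum (\<lambda>e. c (Suc ` e)) (complete_edges {..<m}) \<le> sum c (complete_edges {..<Suc m})"
proof -
  have "sum (\<lambda>e. c (Suc ` e)) (complete_edges {..<m}) = sum c (complete_edges (Suc ` {..<m}))"
    by (simp add: sum_complete_edges_image)
  also have "\<dots> \<le> sum c (complete_edges {..<Suc m})"
    by (rule sum_mono2[OF finite_complete_edges complete_edges_mono]) auto
  finally show ?thesis .
qed

lemma no_light_matching_delete_zero:
  assumes "shifted (Suc m) c" "no_light_matching {..<Suc m} (Suc r) c"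
    and "2 * r + 1 < m" "c {0, 2 * r + 1} = 0"
  shows "no_light_matching {..<m} r (\<lambda>e. c (Suc ` e))"
  unfolding no_light_matching_def
proof
  fix M' assume M': "M' \<in> matchings {..<m} r"
  define M where "M = image Suc ` M'"
  have "M \<in> matchings (Suc ` {..<m}) r"
    unfolding M_def by (rule matchings_image[OF M']) simp
  then have M: "M \<in> matchings {..<Suc m} r"
    using matchings_mono[of "Suc ` {..<m}" "{..<Suc m}"] by auto
  have "card (\<Union>M) \<le> 2 * r"
    using M card_Union_complete_edges unfolding matchings_def by auto
  moreover have "finite (\<Union>M)"
    using M unfolding matchings_def complete_edges_def by (auto intro: finite_subset)
  ultimately have "\<not> {1..2 * r + 1} \<subseteq> \<Union>M"
    using card_mono[of "\<Union>M" "{1..2 * r + 1}"] by auto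
  then obtain x where x: "x \<in> {1..2 * r + 1}" "x \<notin> \<Union>M"
    by blast
  have "0 \<notin> \<Union>M"
    unfolding M_def by auto
  then have "2 \<le> c {0, x} + sum c M"
    using assms(2,3) x by (intro no_light_matching_insert[OF _ _ M]) auto
  moreover have "c {0, x} \<le> c {0, 2 * r + 1}"
    using x assms(1,3) unfolding shifted_def by (cases "x = 2 * r + 1") auto
  moreover have "sum c M = (\<Sum>e\<in>M'. c (Suc ` e))"
    using M' inj_on_subset[OF inj_on_image_complete_edges[of Suc "{..<m}"]]
    unfolding M_def matchings_def by (simp add: sum.reindex)
  ultimately show "2 \<le> (\<Sum>e\<in>M'. c (Suc ` e))"
    using assms(4) by simp
qed

definition nest :: "nat \<Rightarrow> nat set set" where
  "nest r = (\<lambda>i. {i, 2 * r - 3 - i}) ` {..<r - 1}"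

lemma nest_memI:
  assumes "2 \<le> r" "p < 2 * r - 2"
  shows "{p, 2 * r - 3 - p} \<in> nest r"
proof (cases "p < r - 1")
  case False
  then have "2 * r - 3 - p < r - 1" "2 * r - 3 - (2 * r - 3 - p) = p"
    using assms by auto
  then have "{2 * r - 3 - p, p} \<in> nest r"
    unfolding nest_def by (intro image_eqI[where x = "2 * r - 3 - p"]) auto
  then show ?thesis
    by (simp add: insert_commute)
qed (auto simp: nest_def)

lemma Union_nest: "2 \<le> r \<Longrightarrow> \<Union>(nest r) \<subseteq> {..<2 * r - 2}"
  unfolding nest_def by auto

lemma nest_in_matchings:
  assumes "2 \<le> r" "2 * r - 2 \<le> n"
  shows "nest r \<in> matchings {..<n} (r - 1)"
proof -
  have "inj_on (\<lambda>i. {i, 2 * r - 3 - i}) {..<r - 1}"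
    by (rule inj_onI) (auto simp: doubleton_eq_iff)
  then have "card (nest r) = r - 1"
    unfolding nest_def by (simp add: card_image)
  moreover have "nest r \<subseteq> complete_edges {..<n}"
    using assms unfolding nest_def by auto
  moreover have "matching (nest r)"
    unfolding matching_def nest_def using assms by auto
  ultimately show ?thesis
    unfolding matchings_def by blast
qed

lemma nest_cases:
  fixes c :: "nat set \<Rightarrow> nat"
  obtains (corner_zero) "c {0, 2 * r - 1} = 0"
    | (nest_positive) s where "s \<le> r - 2" "1 \<le> c {s, 2 * r - 3 - s}"
    | (nest_zero) "sum c (nest r) = 0" "1 \<le> c {0, 2 * r - 1}"
proof (cases "\<exists>e\<in>nest r. c e \<noteq> 0")
  case True
  then obtain s where "s < r - 1" "c {s, 2 * r - 3 - s} \<noteq> 0"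
    unfolding nest_def by auto
  then show ?thesis
    by (intro that(2)[of s]) auto
next
  case False
  then show ?thesis
    using that(1,3) by fastforce
qed

lemma weight_bound_nest_edge_positive:
  assumes "shifted n c" "2 \<le> r" "2 * r < n" "s \<le> r - 2" "1 \<le> c {s, 2 * r - 3 - s}"
  shows "(int n - 2 * int r + 3 + int s) * (int n + 2 * int r - 4 - 3 * int s)
           \<le> 2 * int (sum c (complete_edges {..<n}))"
proof -
  define t where "t = 2 * r - 3 - s"
  have st: "s < t" "t \<le> n" and t_int: "int t = 2 * int r - 3 - int s"
    using assms(2-4) unfolding t_def by auto
  have "b - s \<le> lower_degree c b" if "t \<le> b" "b < n" for b
  proof -
    have "s * 0 + (b - s) * 1 \<le> lower_degree c b"
    proof (rule lower_degree_ge)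
      fix a assume "s \<le> a" "a < b"
      then show "1 \<le> c {a, b}"
        using shifted_mono[OF assms(1) \<open>a < b\<close> \<open>b < n\<close> \<open>s \<le> a\<close> \<open>t \<le> b\<close> st(1)] assms(5)
        unfolding t_def by simp
    qed (use that st in auto)
    then show ?thesis
      by simp
  qed
  then have "(\<Sum>b\<in>{t..<n}. b - s) \<le> (\<Sum>b\<in>{t..<n}. lower_degree c b)"
    by (intro sum_mono) auto
  also have "\<dots> \<le> sum c (complete_edges {..<n})"
    by (rule sum_lower_degree_le_weight) auto
  finally have le: "(\<Sum>b\<in>{t..<n}. b - s) \<le> sum c (complete_edges {..<n})" .
  have "(\<Sum>b\<in>{t..<n}. int b - int s) = int (\<Sum>b\<in>{t..<n}. b - s)"
    unfolding of_nat_sum using st by (intro sum.cong) auto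
  with le have "(\<Sum>b\<in>{t..<n}. int b - int s) \<le> int (sum c (complete_edges {..<n}))"
    by linarith
  then show ?thesis
    using sum_atLeastLessThan_affine[OF st(2), of "int s"] t_int by (simp add: algebra_simps)
qed

lemma nest_light_top_edge:
  assumes "no_light_matching {..<n} r c" "2 \<le> r" "2 * r < n" "sum c (nest r) = 0"
  shows "2 \<le> c {2 * r - 2, 2 * r - 1}"
proof -
  have N: "nest r \<in> matchings {..<n} (r - 1)"
    using assms(2,3) by (intro nest_in_matchings) auto
  have light: "no_light_matching {..<n} (Suc (r - 1)) c"
    using assms(1,2) by simp
  have "{2 * r - 2, 2 * r - 1} \<inter> \<Union>(nest r) = {}"
    using Union_nest[OF assms(2)] by auto
  then have "2 \<le> c {2 * r - 2, 2 * r - 1} + sum c (nest r)"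
    using assms(2,3) by (intro no_light_matching_insert[OF light _ N]) auto
  then show ?thesis
    using assms(4) by simp
qed

lemma nest_light_cross_edges:
  assumes "no_light_matching {..<n} r c" "2 \<le> r" "2 * r < n" "sum c (nest r) = 0"
    and p: "p < 2 * r - 2"
  shows "2 \<le> c {p, 2 * r - 2} + c {2 * r - 3 - p, 2 * r - 1}"
proof -
  define q where "q = 2 * r - 3 - p"
  have "p \<noteq> q" "q < 2 * r - 2"
    using p assms(2) unfolding q_def by presburger+
  have N: "nest r \<in> matchings {..<n} (r - 1)"
    using assms(2,3) by (intro nest_in_matchings) auto
  have e0: "{p, q} \<in> nest r"
    unfolding q_def using assms(2) p by (rule nest_memI)
  define N0 where "N0 = nest r - {{p, q}}"
  have N0: "N0 \<in> matchings {..<n} (r - 1 - 1)" "{p, q} \<inter> \<Union>N0 = {}"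
    using matchings_remove[OF N e0] unfolding N0_def by auto
  have "\<Union>N0 \<subseteq> {..<2 * r - 2}"
    using Union_nest[OF assms(2)] unfolding N0_def by blast
  then have "{q, 2 * r - 1} \<inter> \<Union>N0 = {}"
    using N0(2) by auto
  moreover have "{q, 2 * r - 1} \<in> complete_edges {..<n}"
    using \<open>q < 2 * r - 2\<close> assms(3) by auto
  ultimately have N1: "insert {q, 2 * r - 1} N0 \<in> matchings {..<n} (Suc (r - 1 - 1))"
    and "{q, 2 * r - 1} \<notin> N0"
    using matchings_insert[OF N0(1) finite_lessThan] by auto
  moreover have "{p, 2 * r - 2} \<inter> \<Union>(insert {q, 2 * r - 1} N0) = {}"
    using N0(2) \<open>\<Union>N0 \<subseteq> {..<2 * r - 2}\<close> \<open>p \<noteq> q\<close> \<open>q < 2 * r - 2\<close> p by auto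
  moreover have "Suc (Suc (r - 1 - 1)) = r"
    using assms(2) by linarith
  then have "no_light_matching {..<n} (Suc (Suc (r - 1 - 1))) c"
    using assms(1) by simp
  ultimately have "2 \<le> c {p, 2 * r - 2} + sum c (insert {q, 2 * r - 1} N0)"
    using p assms(3) by (intro no_light_matching_insert) auto
  moreover have "sum c N0 \<le> sum c (nest r)"
    unfolding N0_def by (rule sum_mono2[OF finite_matchings[OF finite_lessThan N]]) auto
  ultimately show ?thesis
    using finite_matchings[OF _ N0(1)] \<open>{q, 2 * r - 1} \<notin> N0\<close> assms(4) unfolding q_def by simp
qed

lemma nest_light_lower_degrees:
  assumes "no_light_matching {..<n} r c" "2 \<le> r" "2 * r < n" "sum c (nest r) = 0"
  shows "4 * r - 2 \<le> lower_degree c (2 * r - 2) + lower_degree c (2 * r - 1)"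
proof -
  have "(\<Sum>p<2 * r - 2. 2) \<le> (\<Sum>p<2 * r - 2. c {p, 2 * r - 2} + c {2 * r - 3 - p, 2 * r - 1})"
    using nest_light_cross_edges[OF assms] by (intro sum_mono) auto
  also have "\<dots> = lower_degree c (2 * r - 2) + (\<Sum>a<2 * r - 2. c {a, 2 * r - 1})"
  proof -
    have "2 * r - 2 - Suc p = 2 * r - 3 - p" for p
      by simp
    then show ?thesis
      unfolding lower_degree_def sum.distrib
      using sum.nat_diff_reindex[where g = "\<lambda>a. c {a, 2 * r - 1}" and n = "2 * r - 2"] by simp
  qed
  finally have "(2 * r - 2) * 2 \<le> lower_degree c (2 * r - 2) + (\<Sum>a<2 * r - 2. c {a, 2 * r - 1})"
    by simp
  moreover have "2 * r - 1 = Suc (2 * r - 2)"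
    using assms(2) by simp
  then have "lower_degree c (2 * r - 1) = (\<Sum>a<2 * r - 2. c {a, 2 * r - 1}) + c {2 * r - 2, 2 * r - 1}"
    unfolding lower_degree_def by simp
  ultimately show ?thesis
    using nest_light_top_edge[OF assms] assms(2) by linarith
qed

lemma shifted_lower_degree_ge:
  assumes "shifted n c" "2 \<le> r" "2 * r \<le> b" "b < n"
    and "1 \<le> c {0, 2 * r - 1}" "2 \<le> c {2 * r - 2, 2 * r - 1}"
  shows "2 * b - (2 * r - 2) \<le> lower_degree c b"
proof -
  have b: "2 * r - 1 \<le> b" "2 * r - 2 < 2 * r - 1"
    using assms(2,3) by auto
  have "(2 * r - 2) * 1 + (b - (2 * r - 2)) * 2 \<le> lower_degree c b"
  proof (rule lower_degree_ge)
    fix a assume "a < 2 * r - 2"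
    then have "a < b" "0 < 2 * r - 1"
      using assms(2,3) by auto
    then show "1 \<le> c {a, b}"
      using shifted_mono[OF assms(1) \<open>a < b\<close> assms(4) _ b(1), of 0] assms(5) by simp
  next
    fix a assume "2 * r - 2 \<le> a" "a < b"
    then show "2 \<le> c {a, b}"
      using shifted_mono[OF assms(1) \<open>a < b\<close> assms(4) _ b] assms(6) by simp
  qed (use assms(3) in simp)
  then show ?thesis
    using assms(3) by simp
qed

lemma weight_bound_nest_light:
  assumes "shifted n c" "no_light_matching {..<n} r c" "2 \<le> r" "2 * r < n"
    and "sum c (nest r) = 0" "1 \<le> c {0, 2 * r - 1}"
  shows "(int n - 2 * int r + 2) * (int n - 1) \<le> int (sum c (complete_edges {..<n}))"
proof -
  have "4 * r - 2 \<le> (\<Sum>b\<in>{2 * r - 2, 2 * r - 1}. lower_degree c b)"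
    using nest_light_lower_degrees[OF assms(2-5)] assms(3) by simp
  moreover have "(\<Sum>b\<in>{2 * r..<n}. 2 * b - (2 * r - 2)) \<le> (\<Sum>b\<in>{2 * r..<n}. lower_degree c b)"
    using shifted_lower_degree_ge[OF assms(1,3) _ _ assms(6) nest_light_top_edge[OF assms(2-5)]]
    by (intro sum_mono) auto
  moreover have "(\<Sum>b\<in>{2 * r - 2, 2 * r - 1} \<union> {2 * r..<n}. lower_degree c b)
      \<le> sum c (complete_edges {..<n})"
    using assms(4) by (intro sum_lower_degree_le_weight) auto
  moreover have "(\<Sum>b\<in>{2 * r - 2, 2 * r - 1} \<union> {2 * r..<n}. lower_degree c b)
      = (\<Sum>b\<in>{2 * r - 2, 2 * r - 1}. lower_degree c b) + (\<Sum>b\<in>{2 * r..<n}. lower_degree c b)"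
    using assms(3) by (intro sum.union_disjoint) auto
  ultimately have "4 * r - 2 + (\<Sum>b\<in>{2 * r..<n}. 2 * b - (2 * r - 2)) \<le> sum c (complete_edges {..<n})"
    by linarith
  then have "int (4 * r - 2) + int (\<Sum>b\<in>{2 * r..<n}. 2 * b - (2 * r - 2)) \<le> int (sum c (complete_edges {..<n}))"
    by (metis of_nat_add of_nat_mono)
  moreover have "int (\<Sum>b\<in>{2 * r..<n}. 2 * b - (2 * r - 2)) = 2 * (\<Sum>b\<in>{2 * r..<n}. int b - (int r - 1))"
    unfolding of_nat_sum sum_distrib_left using assms(3) by (intro sum.cong) auto
  moreover have "2 * (\<Sum>b\<in>{2 * r..<n}. int b - (int r - 1)) = (int n - 2 * int r) * (int n + 1)"
    using sum_atLeastLessThan_affine[of "2 * r" n "int r - 1"] assms(4) by (simp add: algebra_simps)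
  moreover have "(int n - 2 * int r + 2) * (int n - 1) = 4 * int r - 2 + (int n - 2 * int r) * (int n + 1)"
    by (simp add: algebra_simps)
  ultimately show ?thesis
    using assms(3) by linarith
qed

lemma min_le_concave_quadratic:
  fixes n r s :: int
  assumes "0 \<le> s" "s \<le> r - 2"
  shows "min ((n - 2 * r + 3) * (n + 2 * r - 4)) ((n - r + 1) * (n - r + 2))
           \<le> (n - 2 * r + 3 + s) * (n + 2 * r - 4 - 3 * s)"
proof -
  define g where "g t = (n - 2 * r + 3 + t) * (n + 2 * r - 4 - 3 * t)" for t
  define m where "m = min (g 0) (g (r - 2))"
  have "(r - 2) * g s = (r - 2 - s) * g 0 + s * g (r - 2) + 3 * s * (r - 2 - s) * (r - 2)"
    unfolding g_def by (simp add: algebra_simps)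
  moreover have "(r - 2 - s) * m \<le> (r - 2 - s) * g 0" "s * m \<le> s * g (r - 2)"
    using assms unfolding m_def by (auto intro: mult_left_mono)
  moreover have "0 \<le> 3 * s * (r - 2 - s) * (r - 2)"
    using assms by simp
  ultimately have "(r - 2) * m \<le> (r - 2) * g s"
    by (simp add: algebra_simps)
  then have "m \<le> g s"
    using assms unfolding m_def by (cases "r - 2 = 0") (auto simp: mult_le_cancel_left)
  moreover have "g (r - 2) = (n - r + 1) * (n - r + 2)"
    unfolding g_def by (simp add: algebra_simps)
  ultimately show ?thesis
    unfolding m_def g_def by simp
qed

lemma min_quadratics_le_pred:
  fixes K R :: int
  assumes "3 \<le> R"
  shows "min ((K + 3 * R - 4) * (K - R + 3)) ((K + 1) * (K + 2))
           \<le> (K + 3 * (R - 1) - 4) * (K - (R - 1) + 3)"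
proof (cases "K \<le> 3 * R - 8")
  case True
  have "(K + 3 * (R - 1) - 4) * (K - (R - 1) + 3) - (K + 3 * R - 4) * (K - R + 3) = 2 * (3 * R - K - 8)"
    by (simp add: algebra_simps)
  then have "0 \<le> (K + 3 * (R - 1) - 4) * (K - (R - 1) + 3) - (K + 3 * R - 4) * (K - R + 3)"
    using True by simp
  then show ?thesis
    by simp
next
  case False
  have "(K + 3 * (R - 1) - 4) * (K - (R - 1) + 3) - (K + 1) * (K + 2) = (R - 3) * (2 * K - 3 * R + 10)"
    by (simp add: algebra_simps)
  then have "0 \<le> (K + 3 * (R - 1) - 4) * (K - (R - 1) + 3) - (K + 1) * (K + 2)"
    using False assms by simp
  then show ?thesis
    by simp
qed

text \<open>Twice the bound of the statement; for \<open>r = 1\<close> the first two terms are not lower bounds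
  and are dropped.\<close>

definition matching_bound :: "nat \<Rightarrow> nat \<Rightarrow> int" where
  "matching_bound r k =
     (if r = 1 then 2 * (int k - int r + 2) * (int k + int r - 1)
      else min (min ((int k + 3 * int r - 4) * (int k - int r + 3)) ((int k + 1) * (int k + 2)))
               (2 * (int k - int r + 2) * (int k + int r - 1)))"

lemma matching_bound_le_third:
  "matching_bound r k \<le> 2 * ((int (r + k) - 2 * int r + 2) * (int (r + k) - 1))"
proof -
  have "2 * ((int (r + k) - 2 * int r + 2) * (int (r + k) - 1)) = 2 * (int k - int r + 2) * (int k + int r - 1)"
    by (simp add: algebra_simps)
  then show ?thesis
    unfolding matching_bound_def by simp
qed

lemma matching_bound_le_nest_quadratic:
  assumes "2 \<le> r" "s \<le> r - 2"
  shows "matching_bound r k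
           \<le> (int (r + k) - 2 * int r + 3 + int s) * (int (r + k) + 2 * int r - 4 - 3 * int s)"
proof -
  have "matching_bound r k
      = min (min ((int k + 3 * int r - 4) * (int k - int r + 3)) ((int k + 1) * (int k + 2)))
            (2 * (int k - int r + 2) * (int k + int r - 1))"
    using assms unfolding matching_bound_def by simp
  also have "\<dots> \<le> min ((int k + 3 * int r - 4) * (int k - int r + 3)) ((int k + 1) * (int k + 2))"
    by (rule min.cobounded1)
  also have "(int k + 3 * int r - 4) * (int k - int r + 3)
      = (int (r + k) - 2 * int r + 3) * (int (r + k) + 2 * int r - 4)"
    by (simp add: algebra_simps)
  also have "(int k + 1) * (int k + 2) = (int (r + k) - int r + 1) * (int (r + k) - int r + 2)"
    by (simp add: algebra_simps)
  also have "min ((int (r + k) - 2 * int r + 3) * (int (r + k) + 2 * int r - 4))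
                 ((int (r + k) - int r + 1) * (int (r + k) - int r + 2))
      \<le> (int (r + k) - 2 * int r + 3 + int s) * (int (r + k) + 2 * int r - 4 - 3 * int s)"
    using assms by (intro min_le_concave_quadratic) auto
  finally show ?thesis .
qed

lemma matching_bound_mono:
  assumes "2 \<le> r"
  shows "matching_bound r k \<le> matching_bound (r - 1) k"
proof -
  define K R where "K = int k" and "R = int r"
  have R: "2 \<le> R" "int (r - 1) = R - 1"
    using assms unfolding R_def by auto
  have "2 * (K - (R - 1) + 2) * (K + (R - 1) - 1) - 2 * (K - R + 2) * (K + R - 1) = 4 * (R - 2)"
    by (simp add: algebra_simps)
  then have third: "2 * (K - R + 2) * (K + R - 1) \<le> 2 * (K - (R - 1) + 2) * (K + (R - 1) - 1)"
    using R by simp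
  show ?thesis
  proof (cases "r = 2")
    case True
    then show ?thesis
      using third unfolding matching_bound_def K_def R_def by simp
  next
    case False
    then have "3 \<le> R"
      using assms unfolding R_def by simp
    then show ?thesis
      using min_quadratics_le_pred[of R K] False third assms R(2)
      unfolding matching_bound_def K_def R_def by auto
  qed
qed

lemma matching_bound_one_le_weight:
  assumes "no_light_matching {..<Suc k} 1 c"
  shows "matching_bound 1 k \<le> 2 * int (sum c (complete_edges {..<Suc k}))"
proof -
  have "Suc k * k \<le> sum c (complete_edges {..<Suc k})"
    using weight_ge_of_no_light_matching_one[OF assms] by simp
  then have "int (Suc k * k) \<le> int (sum c (complete_edges {..<Suc k}))"
    by (rule of_nat_mono)
  then show ?thesis
    unfolding matching_bound_def by (simp add: algebra_simps)
qed

lemma matching_bound_le_weight: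
  assumes "0 < r" "r < k" "shifted (r + k) c" "no_light_matching {..<r + k} r c"
  shows "matching_bound r k \<le> 2 * int (sum c (complete_edges {..<r + k}))"
  using assms
proof (induction r arbitrary: c)
  case (Suc r)
  define n where "n = Suc r + k"
  have n: "2 * Suc r < n"
    using Suc.prems(2) unfolding n_def by auto
  show ?case
  proof (cases "r = 0")
    case True
    then show ?thesis
      using matching_bound_one_le_weight Suc.prems(4) by simp
  next
    case False
    then have r2: "2 \<le> Suc r"
      by simp
    from nest_cases[of c "Suc r"] show ?thesis
    proof cases
      case corner_zero
      define c' where "c' e = c (Suc ` e)" for e
      have "matching_bound r k \<le> 2 * int (sum c' (complete_edges {..<r + k}))"
        using Suc.prems corner_zero False
        by (intro Suc.IH) (auto simp: c'_def intro: shifted_delete_zero no_light_matching_delete_zero)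
      moreover have "sum c' (complete_edges {..<r + k}) \<le> sum c (complete_edges {..<Suc r + k})"
        unfolding c'_def using weight_image_Suc_le[of c "r + k"] by simp
      then have "int (sum c' (complete_edges {..<r + k})) \<le> int (sum c (complete_edges {..<Suc r + k}))"
        by (rule of_nat_mono)
      ultimately show ?thesis
        using matching_bound_mono[OF r2, of k] by simp
    next
      case (nest_positive s)
      then show ?thesis
        using weight_bound_nest_edge_positive[OF Suc.prems(3)[folded n_def] r2 n nest_positive]
          matching_bound_le_nest_quadratic[OF r2 nest_positive(1), of k]
        unfolding n_def by linarith
    next
      case nest_zero
      then show ?thesis
        using weight_bound_nest_light[OF Suc.prems(3,4)[folded n_def] r2 n]
          matching_bound_le_third[of "Suc r" k]
        unfolding n_def by linarith
    qed
  qed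
qed simp

lemma matching_bound_gt_small_k:
  assumes "real k \<le> (3 * real r - 7) / 2"
    and "real W < min ((real k + 3 * real r - 4) * (real k - real r + 3) / 2)
                      ((real k - real r + 2) * (real k + real r - 1))"
  shows "2 * int W < matching_bound r k"
proof -
  have "(real k + 1) * (real k + 2) - (real k + 3 * real r - 4) * (real k - real r + 3)
          = (real r - 2) * (3 * real r - 7 - 2 * real k)"
    by (simp add: algebra_simps)
  moreover have "0 \<le> (real r - 2) * (3 * real r - 7 - 2 * real k)"
    using assms(1) by (intro mult_nonneg_nonneg) auto
  moreover have "r \<noteq> 1"
    using assms(1) by auto
  ultimately have "real_of_int (2 * int W) < real_of_int (matching_bound r k)"
    using assms(2) unfolding matching_bound_def by (simp add: of_int_min algebra_simps)
  then show ?thesis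
    by (simp only: of_int_less_iff)
qed

lemma matching_bound_gt_large_k:
  assumes "0 < r" "real k > (3 * real r - 7) / 2"
    and "real W < min ((real k + 1) * (real k + 2) / 2) ((real k - real r + 2) * (real k + real r - 1))"
  shows "2 * int W < matching_bound r k"
proof -
  have "(real k + 3 * real r - 4) * (real k - real r + 3) - (real k + 1) * (real k + 2)
          = (real r - 2) * (2 * real k - 3 * real r + 7)"
    by (simp add: algebra_simps)
  moreover have "0 \<le> (real r - 2) * (2 * real k - 3 * real r + 7)" if "r \<noteq> 1"
    using assms that by (intro mult_nonneg_nonneg) auto
  ultimately have "real_of_int (2 * int W) < real_of_int (matching_bound r k)"
    using assms(3) unfolding matching_bound_def by (auto simp: of_int_min algebra_simps)
  then show ?thesis
    by (simp only: of_int_less_iff)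
qed

section \<open>Good matchings\<close>

definition defect :: "'a set set \<Rightarrow> 'a set set \<Rightarrow> 'a set \<Rightarrow> nat" where
  "defect E1 E2 e = (if e \<in> E1 then 1 else if e \<in> E2 then 2 else 0)"

lemma sum_defect:
  assumes "finite M" "E1 \<inter> E2 = {}"
  shows "sum (defect E1 E2) M = card (M \<inter> E1) + 2 * card (M \<inter> E2)"
proof -
  have "sum (defect E1 E2) M = (\<Sum>e\<in>M. (if e \<in> E1 then 1 else 0) + 2 * (if e \<in> E2 then 1 else 0))"
    using assms(2) unfolding defect_def by (intro sum.cong) auto
  also have "\<dots> = card (M \<inter> E1) + 2 * card (M \<inter> E2)"
    using assms(1) by (simp add: sum.distrib sum_distrib_left[symmetric] sum.If_cases Int_def)
  finally show ?thesis .
qed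

lemma good_matching_iff_defect:
  assumes "finite V" "E1 \<inter> E2 = {}"
  shows "good_matching (complete_edges V) E1 E2 M \<and> card M = r
           \<longleftrightarrow> M \<in> matchings V r \<and> sum (defect E1 E2) M \<le> 1"
proof -
  have "sum (defect E1 E2) M \<le> 1 \<longleftrightarrow> M \<inter> E2 = {} \<and> card (M \<inter> E1) \<le> 1"
    if "M \<subseteq> complete_edges V"
  proof -
    have "finite M"
      using that finite_complete_edges[OF assms(1)] by (rule finite_subset)
    then have "M \<inter> E2 = {} \<longleftrightarrow> card (M \<inter> E2) = 0"
      by simp
    then show ?thesis
      unfolding sum_defect[OF \<open>finite M\<close> assms(2)] by linarith
  qed
  then show ?thesis
    unfolding good_matching_def matchings_def by auto
qed

lemma weight_bound_of_no_good_matching: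
  assumes "finite V" "card V = r + k" "0 < r" "r < k"
    and "E1 \<inter> E2 = {}" "E1 \<subseteq> complete_edges V" "E2 \<subseteq> complete_edges V"
    and "\<nexists>M. good_matching (complete_edges V) E1 E2 M \<and> card M = r"
  shows "matching_bound r k \<le> 2 * int (card E1 + 2 * card E2)"
proof -
  have light: "no_light_matching V r (defect E1 E2)"
    unfolding no_light_matching_def using good_matching_iff_defect[OF assms(1,5)] assms(8) by force
  obtain f where "bij_betw f {..<r + k} V"
    using ex_bij_betw_nat_finite[OF assms(1)] assms(2) by (auto simp: atLeast0LessThan)
  then have f: "inj_on f {..<r + k}" "f ` {..<r + k} = V"
    by (auto simp: bij_betw_def)
  then have "no_light_matching {..<r + k} r (\<lambda>e. defect E1 E2 (f ` e))"
    using light by (intro no_light_matching_image) auto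
  then obtain c where "shifted (r + k) c" "no_light_matching {..<r + k} r c"
    and weight: "sum c (complete_edges {..<r + k}) = sum (defect E1 E2) (complete_edges V)"
    using sum_complete_edges_image[OF f(1)] f(2) by (metis obtain_shifted)
  then have "matching_bound r k \<le> 2 * int (sum (defect E1 E2) (complete_edges V))"
    using matching_bound_le_weight assms(3,4) by metis
  moreover have "sum (defect E1 E2) (complete_edges V) = card E1 + 2 * card E2"
    using sum_defect[OF finite_complete_edges[OF assms(1)] assms(5)] assms(6,7)
    by (simp add: Int_absorb1)
  ultimately show ?thesis
    by simp
qed

theorem lemma16:
  fixes V :: "'a set" and r k :: nat and E0 E1 E2 :: "'a set set"
  assumes "finite V" and "card V = r + k"
    and "0 < r" and "r < k"
    and "ordered_partition3 (complete_edges V) E0 E1 E2"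
  shows "(real k \<le> (3 * real r - 7) / 2 \<and>
          real (card E1 + 2 * card E2) <
            min ((real k + 3 * real r - 4) * (real k - real r + 3) / 2)
                ((real k - real r + 2) * (real k + real r - 1))
          \<longrightarrow> (\<exists>M. good_matching (complete_edges V) E1 E2 M \<and> card M = r))
       \<and> (real k > (3 * real r - 7) / 2 \<and>
          real (card E1 + 2 * card E2) <
            min ((real k + 1) * (real k + 2) / 2)
                ((real k - real r + 2) * (real k + real r - 1))
          \<longrightarrow> (\<exists>M. good_matching (complete_edges V) E1 E2 M \<and> card M = r))"
proof -
  have "E1 \<inter> E2 = {}" "E1 \<subseteq> complete_edges V" "E2 \<subseteq> complete_edges V"
    using assms(5) unfolding ordered_partition3_def by auto
  then have "2 * int (card E1 + 2 * card E2) < matching_bound r k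
      \<Longrightarrow> \<exists>M. good_matching (complete_edges V) E1 E2 M \<and> card M = r"
    using weight_bound_of_no_good_matching[OF assms(1-4)] by (meson not_le)
  then show ?thesis
    using matching_bound_gt_small_k matching_bound_gt_large_k[OF assms(3)] by blast
qed

end
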